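(* Let $\mathfrak n=\mathfrak v\oplus\mathfrak z$ be a Lie algebra of Heisenberg type and let $\mathcal L\subset\mathfrak v$ be a Lagrangian subspace. Then $\mathcal L^\perp$ (orthogonal complement in $\mathfrak v$) is also Lagrangian, $\mathfrak v=\mathcal L\oplus\mathcal L^\perp$, and $J_z(\mathcal L)=\mathcal L^\perp$ for every non-zero $z\in\mathfrak z$.
   Context: Lie algebra of Heisenberg type: $\mathfrak z=\mathbb R^m$ with standard inner product $\langle\cdot,\cdot\rangle$; $\mathfrak v$ is a finite-dimensional real module over the Clifford algebra $C(m)$ (relations $z^2=-\langle z,z\rangle 1$) with an inner product $(\cdot,\cdot)$ for which each $J_z$ (action of $z$) is skew-symmetric; $\mathfrak n=\mathfrak v\oplus\mathfrak z$ has $\mathfrak z$ central and bracket on $\mathfrak v$ defined by $\langle z,[u,v]\rangle=(J_zu,v)$. A Lagrangian subspace is a subspace $\mathcal L\subset\mathfrak v$ with $[\mathcal L,\mathcal L]=0$ and $\dim\mathcal L=\tfrac12\dim\mathfrak v$. *)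

theory Defs
  imports "HOL-Analysis.Analysis"
begin

text \<open>Heisenberg-type data: \<open>J z\<close> is the action of \<open>z \<in> \<zz>\<close> on the Clifford module \<open>\<vv>\<close>.
  A real C(m)-module structure is the same as a linear map \<open>z \<mapsto> J z\<close> into End(\<vv>)
  with \<open>J z \<circ> J z = -\<langle>z,z\<rangle> id\<close> (universal property of the Clifford algebra).\<close>
definition heisenberg_type :: "('z::euclidean_space \<Rightarrow> 'v::euclidean_space \<Rightarrow> 'v) \<Rightarrow> bool" where
  "heisenberg_type J \<longleftrightarrow>
     (\<forall>u. linear (\<lambda>z. J z u)) \<and>
     (\<forall>z. linear (J z)) \<and>
     (\<forall>z u. J z (J z u) = - (z \<bullet> z) *\<^sub>R u) \<and>
     (\<forall>z u v. J z u \<bullet> v = - (u \<bullet> J z v))"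

text \<open>The bracket \<open>[u,v] \<in> \<zz>\<close>, characterised by \<open>\<langle>z,[u,v]\<rangle> = (J z u, v)\<close>,
  written in an orthonormal basis of \<open>\<zz>\<close>.\<close>
definition htbracket :: "('z::euclidean_space \<Rightarrow> 'v::euclidean_space \<Rightarrow> 'v) \<Rightarrow> 'v \<Rightarrow> 'v \<Rightarrow> 'z" where
  "htbracket J u v = (\<Sum>b\<in>Basis. (J b u \<bullet> v) *\<^sub>R b)"

definition lagrangian :: "('z::euclidean_space \<Rightarrow> 'v::euclidean_space \<Rightarrow> 'v) \<Rightarrow> 'v set \<Rightarrow> bool" where
  "lagrangian J L \<longleftrightarrow> subspace L \<and> (\<forall>u\<in>L. \<forall>v\<in>L. htbracket J u v = 0) \<and>
     2 * dim L = DIM('v)"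

end

theory Submission
  imports Defs
begin

text \<open>Isotropy of \<open>L\<close> says \<open>(J\<^sub>z u, v) = 0\<close> for all \<open>u, v \<in> L\<close> and all \<open>z\<close>, i.e.
  \<open>J\<^sub>z(L) \<subseteq> L\<^sup>\<bottom>\<close>. For \<open>z \<noteq> 0\<close> the map \<open>J\<^sub>z\<close> is injective because \<open>J\<^sub>z\<^sup>2 = -|z|\<^sup>2\<close>, and
  \<open>dim L\<^sup>\<bottom> = dim \<vv> - dim L = dim L\<close>, so the inclusion is an equality. Consequently
  \<open>J\<^sub>z(L\<^sup>\<bottom>) = J\<^sub>z\<^sup>2(L) = L\<close>, which is orthogonal to \<open>L\<^sup>\<bottom>\<close>: the complement is isotropic too.\<close>

lemma dim_orthogonal_comp:
  fixes U :: "'a::euclidean_space set"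
  assumes "subspace U"
  shows "dim (U\<^sup>\<bottom>) + dim U = DIM('a)"
proof -
  have "{y \<in> UNIV. \<forall>x \<in> U. orthogonal x y} = U\<^sup>\<bottom>"
    unfolding orthogonal_comp_def by auto
  with dim_subspace_orthogonal_to_vectors[of U UNIV] assms show ?thesis
    by (simp add: dim_UNIV)
qed

lemma orthogonal_comp_sum_eq_UNIV:
  fixes U :: "'a::euclidean_space set"
  assumes "subspace U"
  shows "{x + y | x y. x \<in> U \<and> y \<in> U\<^sup>\<bottom>} = UNIV"
  using subspace_sum_orthogonal_comp[OF assms] unfolding set_plus_def by blast

lemma heisenberg_typeD:
  assumes "heisenberg_type J"
  shows heisenberg_type_linear_in_z: "linear (\<lambda>z. J z u)"
    and heisenberg_type_linear: "linear (J z)"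
    and heisenberg_type_square: "J z (J z u) = - (z \<bullet> z) *\<^sub>R u"
  using assms unfolding heisenberg_type_def by auto

lemma heisenberg_type_inj:
  assumes "heisenberg_type J" and "z \<noteq> 0"
  shows "inj (J z)"
proof (rule injI)
  fix a b assume "J z a = J z b"
  then have "J z (J z a) = J z (J z b)" by simp
  then have "(z \<bullet> z) *\<^sub>R a = (z \<bullet> z) *\<^sub>R b"
    by (simp add: heisenberg_type_square[OF assms(1)])
  then show "a = b" using assms(2) by simp
qed

lemma htbracket_eq_0_iff:
  assumes "heisenberg_type J"
  shows "htbracket J u v = 0 \<longleftrightarrow> (\<forall>z. J z u \<bullet> v = 0)"
proof
  assume bracket: "htbracket J u v = 0"
  have basis: "J b u \<bullet> v = 0" if "b \<in> Basis" for b
  proof -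
    have "htbracket J u v \<bullet> b = J b u \<bullet> v"
      unfolding htbracket_def using that
      by (simp add: inner_sum_left inner_Basis if_distrib cong: if_cong)
    with bracket show ?thesis by simp
  qed
  show "\<forall>z. J z u \<bullet> v = 0"
  proof
    fix z :: 'a
    have "J z u = (\<Sum>b\<in>Basis. (z \<bullet> b) *\<^sub>R J b u)"
      using linear_sum[OF heisenberg_type_linear_in_z[OF assms], of "\<lambda>b. (z \<bullet> b) *\<^sub>R b" Basis]
        linear_scale[OF heisenberg_type_linear_in_z[OF assms]]
      by (simp add: euclidean_representation)
    then show "J z u \<bullet> v = 0" by (simp add: inner_sum_left basis)
  qed
next
  assume "\<forall>z. J z u \<bullet> v = 0"
  then show "htbracket J u v = 0" unfolding htbracket_def by simp
qed

lemma isotropic_image_subset_orthogonal_comp: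
  assumes "heisenberg_type J" and "\<forall>u\<in>L. \<forall>v\<in>L. htbracket J u v = 0"
  shows "J z ` L \<subseteq> L\<^sup>\<bottom>"
proof -
  have "v \<bullet> J z u = 0" if "u \<in> L" "v \<in> L" for u v
    using assms that htbracket_eq_0_iff[OF assms(1)] by (metis inner_commute)
  then show ?thesis
    unfolding orthogonal_comp_def orthogonal_def by blast
qed

lemma lagrangian_image_eq_orthogonal_comp:
  assumes "heisenberg_type J" and "lagrangian J L" and "z \<noteq> 0"
  shows "J z ` L = L\<^sup>\<bottom>"
proof (rule subspace_dim_equal)
  have L: "subspace L" "\<forall>u\<in>L. \<forall>v\<in>L. htbracket J u v = 0" "2 * dim L = DIM('b)"
    using assms(2) unfolding lagrangian_def by auto
  show "subspace (J z ` L)"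
    using linear_subspace_image[OF heisenberg_type_linear[OF assms(1)] L(1)] .
  show "subspace (L\<^sup>\<bottom>)" by (rule subspace_orthogonal_comp)
  show "J z ` L \<subseteq> L\<^sup>\<bottom>"
    using isotropic_image_subset_orthogonal_comp[OF assms(1) L(2)] .
  have "dim (J z ` L) = dim L"
    using dim_image_eq[OF heisenberg_type_linear[OF assms(1)]] heisenberg_type_inj[OF assms(1,3)]
    by (simp add: inj_on_def)
  then show "dim (L\<^sup>\<bottom>) \<le> dim (J z ` L)"
    using dim_orthogonal_comp[OF L(1)] L(3) by simp
qed

lemma lagrangian_orthogonal_comp:
  assumes "heisenberg_type J" and "lagrangian J L"
  shows "lagrangian J (L\<^sup>\<bottom>)"
proof -
  have L: "subspace L" "2 * dim L = DIM('b)"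
    using assms(2) unfolding lagrangian_def by auto
  have "J z u \<bullet> v = 0" if "u \<in> L\<^sup>\<bottom>" "v \<in> L\<^sup>\<bottom>" for u v z
  proof (cases "z = 0")
    case True
    then show ?thesis
      using linear_0[OF heisenberg_type_linear_in_z[OF assms(1)]] by simp
  next
    case False
    have "u \<in> J z ` L"
      using that(1) lagrangian_image_eq_orthogonal_comp[OF assms False] by simp
    then obtain a where "a \<in> L" and "J z u = - (z \<bullet> z) *\<^sub>R a"
      using heisenberg_type_square[OF assms(1)] by blast
    then have "J z u \<in> L"
      by (simp add: subspace_neg[OF L(1)] subspace_scale[OF L(1)])
    with that(2) show ?thesis
      unfolding orthogonal_comp_def orthogonal_def by blast
  qed
  then have "\<forall>u\<in>L\<^sup>\<bottom>. \<forall>v\<in>L\<^sup>\<bottom>. htbracket J u v = 0"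
    using htbracket_eq_0_iff[OF assms(1)] by blast
  with subspace_orthogonal_comp dim_orthogonal_comp[OF L(1)] L(2) show ?thesis
    unfolding lagrangian_def by simp
qed

theorem proposition4p1:
  fixes J :: "'z::euclidean_space \<Rightarrow> 'v::euclidean_space \<Rightarrow> 'v"
    and L :: "'v set"
  assumes "heisenberg_type J"
    and "lagrangian J L"
  shows "lagrangian J (orthogonal_comp L)
    \<and> L \<inter> orthogonal_comp L = {0}
    \<and> {x + y | x y. x \<in> L \<and> y \<in> orthogonal_comp L} = UNIV
    \<and> (\<forall>z. z \<noteq> 0 \<longrightarrow> J z ` L = orthogonal_comp L)"
proof -
  have L: "subspace L" using assms(2) unfolding lagrangian_def by blast
  show ?thesis
    using lagrangian_orthogonal_comp[OF assms] orthogonal_Int_0[OF L] orthogonal_comp_sum_eq_UNIV[OF L]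
      lagrangian_image_eq_orthogonal_comp[OF assms]
    by simp
qed

end
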